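(* Let $k\ge1$ and $D_k=3k^2+3k+1$. Let $\Delta_1,\Delta_2$ be two copies of $T_{D_k}$ compatible with $P_k$ (each being either $c+V(T_{D_k})$ or $c-V(T_{D_k})$ with $c\in P_k$) which share exactly one side and have disjoint interiors. Then the number of points of $P_k$ that are at distance at most $k$ in $T_\infty$ from both $\Delta_1$ and $\Delta_2$ (i.e., counted in the local counts of both copies) is $2k+2$.
   Context: Let $\alpha_1=(1,0)$ and $\alpha_2=(-\tfrac12,\tfrac{\sqrt3}{2})$. The triangular lattice $T_\infty$ is the infinite graph with vertex set $\{a\alpha_1+b\alpha_2 : a,b\in\mathbb Z\}$, two vertices being adjacent iff their Euclidean distance is $1$; distances are graph distances, and the distance from a point to a vertex set is the minimum distance to its elements (zero for points of the set). For $d\ge0$, $V(T_d)=\{a\alpha_1+b\alpha_2 : 0\le b\le a\le d\}$ and $-V(T_d)$ is its point reflection. For $k\ge 1$, let $D_k=3k^2+3k+1$ and let $P_k$ (the pattern $P_{k+1,1}$) be the sublattice $\{x\,u+y\,v : x,y\in\mathbb Z\}$, where $u=(2k+1)\alpha_1+k\alpha_2$ and $v=(k+1)\alpha_1+(2k+1)\alpha_2$. *)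

theory Defs
  imports "HOL-Analysis.Analysis"
begin

text \<open>A lattice point a*alpha1 + b*alpha2 is represented by its integer coordinates (a,b).\<close>
type_synonym tpt = "int \<times> int"

definition emb :: "tpt \<Rightarrow> real \<times> real" where
  "emb p = (real_of_int (fst p) - real_of_int (snd p) / 2, real_of_int (snd p) * sqrt 3 / 2)"

definition tadj :: "tpt \<Rightarrow> tpt \<Rightarrow> bool" where
  "tadj u v \<longleftrightarrow> dist (emb u) (emb v) = 1"

definition tsetdist :: "tpt \<Rightarrow> tpt set \<Rightarrow> nat" where
  "tsetdist x S = (LEAST n. \<exists>y\<in>S. (tadj ^^ n) x y)"

definition padd :: "tpt \<Rightarrow> tpt \<Rightarrow> tpt" where
  "padd c p = (fst c + fst p, snd c + snd p)"

definition psub :: "tpt \<Rightarrow> tpt \<Rightarrow> tpt" where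
  "psub c p = (fst c - fst p, snd c - snd p)"

definition VT :: "nat \<Rightarrow> tpt set" where
  "VT d = {(a, b). 0 \<le> b \<and> b \<le> a \<and> a \<le> int d}"

definition Dk :: "nat \<Rightarrow> nat" where
  "Dk k = 3 * k^2 + 3 * k + 1"

definition Pk :: "nat \<Rightarrow> tpt set" where
  "Pk k = {(x * (2 * int k + 1) + y * (int k + 1), x * int k + y * (2 * int k + 1)) | x y. True}"

definition tcopy :: "bool \<Rightarrow> tpt \<Rightarrow> nat \<Rightarrow> tpt set" where
  "tcopy s c d = (if s then padd c ` VT d else psub c ` VT d)"

definition tcorners :: "bool \<Rightarrow> tpt \<Rightarrow> nat \<Rightarrow> tpt set" where
  "tcorners s c d = (if s then {c, padd c (int d, 0), padd c (int d, int d)}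
                     else {c, psub c (int d, 0), psub c (int d, int d)})"

definition seg_pts :: "tpt \<Rightarrow> tpt \<Rightarrow> tpt set" where
  "seg_pts p q = {x. emb x \<in> closed_segment (emb p) (emb q)}"

definition tsides :: "bool \<Rightarrow> tpt \<Rightarrow> nat \<Rightarrow> tpt set set" where
  "tsides s c d = {seg_pts p q | p q. p \<in> tcorners s c d \<and> q \<in> tcorners s c d \<and> p \<noteq> q}"

definition tinterior :: "tpt set \<Rightarrow> (real \<times> real) set" where
  "tinterior S = interior (convex hull (emb ` S))"

end

theory Submission
  imports Defs
begin

text \<open>
  In the coordinates \<open>a \<alpha>\<^sub>1 + b \<alpha>\<^sub>2\<close>, graph distance in the triangular lattice
  is the hexagonal norm \<open>max |x| |y| |x - y|\<close> of the coordinate difference, so the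
  points within distance \<open>k\<close> of a copy of \<open>T_D\<close> form the triangle pushed out by \<open>k\<close>
  across each of its sides.  Two copies sharing exactly one side are an upward copy
  \<open>c + T_D\<close> and its reflection \<open>c + v - T_D\<close> across one of its sides.  Translating
  by \<open>c \<in> P_k\<close> and rotating by 120 degrees about the centre of \<open>T_D\<close> (a symmetry of
  \<open>P_k = {(a,b). D dvd a + (3k+1) b}\<close>, as \<open>(3k+1)\<^sup>2 \<equiv> -(3k+2) mod D\<close>) reduces
  everything to \<open>v = (D,0)\<close>.  There the common neighbourhood lies in the strip
  \<open>|b| \<le> k\<close>, where the congruence leaves exactly the points \<open>((3k+1) i, -i)\<close> and
  \<open>(D - (3k+1) i, i)\<close> for \<open>0 \<le> i \<le> k\<close>.
\<close>

definition hex_norm :: "int \<Rightarrow> int \<Rightarrow> int" where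
  "hex_norm x y = max \<bar>x\<bar> (max \<bar>y\<bar> \<bar>x - y\<bar>)"

definition hex_dist :: "tpt \<Rightarrow> tpt \<Rightarrow> int" where
  "hex_dist p q = hex_norm (fst q - fst p) (snd q - snd p)"

lemma hex_norm_le_iff: "hex_norm x y \<le> K \<longleftrightarrow> \<bar>x\<bar> \<le> K \<and> \<bar>y\<bar> \<le> K \<and> \<bar>x - y\<bar> \<le> K"
  unfolding hex_norm_def by simp

lemma hex_norm_eq_0_iff: "hex_norm x y = 0 \<longleftrightarrow> x = 0 \<and> y = 0"
  unfolding hex_norm_def by auto

lemma hex_norm_uminus: "hex_norm (- x) (- y) = hex_norm x y"
  unfolding hex_norm_def by (simp add: abs_minus_commute)

lemma hex_norm_triangle: "hex_norm (x + x') (y + y') \<le> hex_norm x y + hex_norm x' y'"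
proof -
  have "\<bar>x\<bar> \<le> hex_norm x y" "\<bar>y\<bar> \<le> hex_norm x y" "\<bar>x - y\<bar> \<le> hex_norm x y"
    "\<bar>x'\<bar> \<le> hex_norm x' y'" "\<bar>y'\<bar> \<le> hex_norm x' y'" "\<bar>x' - y'\<bar> \<le> hex_norm x' y'"
    using hex_norm_le_iff by blast+
  moreover have "\<bar>x + x'\<bar> \<le> \<bar>x\<bar> + \<bar>x'\<bar>" "\<bar>y + y'\<bar> \<le> \<bar>y\<bar> + \<bar>y'\<bar>"
    "\<bar>(x + x') - (y + y')\<bar> \<le> \<bar>x - y\<bar> + \<bar>x' - y'\<bar>"
    by arith+
  ultimately show ?thesis unfolding hex_norm_le_iff by linarith
qed

lemma hex_norm_eq_1_iff: "hex_norm x y = 1 \<longleftrightarrow> x\<^sup>2 - x * y + y\<^sup>2 = 1"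
proof
  assume *: "hex_norm x y = 1"
  then have "x \<in> {-1, 0, 1}" "y \<in> {-1, 0, 1}" unfolding hex_norm_def by auto
  then show "x\<^sup>2 - x * y + y\<^sup>2 = 1" using * by (auto simp: hex_norm_def)
next
  assume *: "x\<^sup>2 - x * y + y\<^sup>2 = 1"
  have "(2 * x - y)\<^sup>2 + 3 * y\<^sup>2 = 4" "(2 * y - x)\<^sup>2 + 3 * x\<^sup>2 = 4"
    using * by (simp_all add: power2_eq_square algebra_simps)
  then have "x\<^sup>2 \<le> 1" "y\<^sup>2 \<le> 1" by (smt (verit) zero_le_power2)+
  then have "x \<in> {-1, 0, 1}" "y \<in> {-1, 0, 1}" by (auto simp: abs_square_le_1)
  then show "hex_norm x y = 1" using * by (auto simp: hex_norm_def)
qed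

lemma hex_norm_step:
  assumes "0 < hex_norm x y"
  obtains e1 e2 where "hex_norm e1 e2 = 1" "hex_norm (x - e1) (y - e2) = hex_norm x y - 1"
proof -
  consider "0 < x" "0 < y" | "0 < x" "y \<le> 0" | "x < 0" "y < 0" | "x < 0" "0 \<le> y"
    | "x = 0" "0 < y" | "x = 0" "y < 0"
    using assms unfolding hex_norm_def by fastforce
  then show ?thesis
  proof cases
    case 1 show ?thesis by (rule that[of 1 1]) (use 1 in \<open>auto simp: hex_norm_def\<close>)
  next
    case 2 show ?thesis by (rule that[of 1 0]) (use 2 in \<open>auto simp: hex_norm_def\<close>)
  next
    case 3 show ?thesis by (rule that[of "-1" "-1"]) (use 3 in \<open>auto simp: hex_norm_def\<close>)
  next
    case 4 show ?thesis by (rule that[of "-1" 0]) (use 4 in \<open>auto simp: hex_norm_def\<close>)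
  next
    case 5 show ?thesis by (rule that[of 0 1]) (use 5 in \<open>auto simp: hex_norm_def\<close>)
  next
    case 6 show ?thesis by (rule that[of 0 "-1"]) (use 6 in \<open>auto simp: hex_norm_def\<close>)
  qed
qed

lemma dist_emb_squared:
  "(dist (emb p) (emb q))\<^sup>2 = of_int ((fst q - fst p)\<^sup>2 - (fst q - fst p) * (snd q - snd p) + (snd q - snd p)\<^sup>2)"
proof -
  define x where "x = real_of_int (fst p - fst q)"
  define y where "y = real_of_int (snd p - snd q)"
  have "(dist (emb p) (emb q))\<^sup>2 = (x - y / 2)\<^sup>2 + (y * sqrt 3 / 2)\<^sup>2"
    unfolding emb_def dist_Pair_Pair dist_real_def x_def y_def
    by (simp add: algebra_simps diff_divide_distrib)
  also have "\<dots> = x\<^sup>2 - x * y + y\<^sup>2"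
    by (simp add: power2_eq_square field_simps)
  finally show ?thesis unfolding x_def y_def by (simp add: power2_eq_square algebra_simps)
qed

lemma tadj_iff_hex_dist: "tadj p q \<longleftrightarrow> hex_dist p q = 1"
proof -
  have "tadj p q \<longleftrightarrow> (dist (emb p) (emb q))\<^sup>2 = 1"
    unfolding tadj_def using zero_le_dist[of "emb p" "emb q"] by (smt (verit) power2_eq_1_iff)
  also have "\<dots> \<longleftrightarrow> hex_dist p q = 1"
    unfolding dist_emb_squared hex_dist_def hex_norm_eq_1_iff by linarith
  finally show ?thesis .
qed

lemma hex_dist_triangle: "hex_dist p r \<le> hex_dist p q + hex_dist q r"
  using hex_norm_triangle[of "fst q - fst p" "fst r - fst q" "snd q - snd p" "snd r - snd q"]
  unfolding hex_dist_def by simp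

lemma hex_dist_nonneg: "0 \<le> hex_dist p q"
  unfolding hex_dist_def hex_norm_def by simp

lemma hex_dist_le_if_relpowp_tadj: "(tadj ^^ n) p q \<Longrightarrow> hex_dist p q \<le> int n"
proof (induction n arbitrary: q)
  case 0
  then show ?case by (simp add: hex_dist_def hex_norm_def)
next
  case (Suc n)
  then obtain r where "(tadj ^^ n) p r" "tadj r q" by (auto elim: relpowp_Suc_E)
  then have "hex_dist p r \<le> int n" "hex_dist r q = 1"
    using Suc.IH tadj_iff_hex_dist by blast+
  then show ?case using hex_dist_triangle[of p q r] by simp
qed

lemma relpowp_tadj_if_hex_dist: "hex_dist p q = int n \<Longrightarrow> (tadj ^^ n) p q"
proof (induction n arbitrary: p)
  case 0
  then show ?case by (simp add: hex_dist_def hex_norm_eq_0_iff prod_eq_iff)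
next
  case (Suc n)
  then have "0 < hex_norm (fst q - fst p) (snd q - snd p)" by (simp add: hex_dist_def)
  then obtain e1 e2 where e: "hex_norm e1 e2 = 1"
    and "hex_norm (fst q - fst p - e1) (snd q - snd p - e2) = hex_norm (fst q - fst p) (snd q - snd p) - 1"
    by (rule hex_norm_step)
  define r where "r = (fst p + e1, snd p + e2)"
  have "tadj p r" using e by (simp add: tadj_iff_hex_dist hex_dist_def r_def)
  moreover have "hex_dist r q = int n"
    using Suc.prems \<open>hex_norm (fst q - fst p - e1) _ = _\<close> by (simp add: hex_dist_def r_def diff_diff_eq)
  ultimately show ?case by (blast intro: relpowp_Suc_I2 Suc.IH)
qed

lemma tsetdist_le_iff:
  assumes "S \<noteq> {}"
  shows "tsetdist p S \<le> k \<longleftrightarrow> (\<exists>q\<in>S. hex_dist p q \<le> int k)"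
proof
  obtain q0 where "q0 \<in> S" using assms by blast
  then have "\<exists>q\<in>S. (tadj ^^ nat (hex_dist p q0)) p q"
    by (intro bexI relpowp_tadj_if_hex_dist) (simp_all add: hex_dist_nonneg)
  then have "\<exists>q\<in>S. (tadj ^^ tsetdist p S) p q"
    unfolding tsetdist_def by (rule LeastI)
  then obtain q where "q \<in> S" "hex_dist p q \<le> int (tsetdist p S)"
    using hex_dist_le_if_relpowp_tadj by blast
  moreover assume "tsetdist p S \<le> k"
  ultimately show "\<exists>q\<in>S. hex_dist p q \<le> int k" by force
next
  assume "\<exists>q\<in>S. hex_dist p q \<le> int k"
  then obtain q where q: "q \<in> S" "hex_dist p q \<le> int k" by blast
  then have "(tadj ^^ nat (hex_dist p q)) p q"
    by (intro relpowp_tadj_if_hex_dist) (simp add: hex_dist_nonneg)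
  then have "tsetdist p S \<le> nat (hex_dist p q)"
    unfolding tsetdist_def using q(1) by (blast intro: Least_le)
  then show "tsetdist p S \<le> k" using q(2) by linarith
qed

definition VT_nbhd :: "int \<Rightarrow> int \<Rightarrow> tpt set" where
  "VT_nbhd D K = {(a, b). -K \<le> b \<and> b \<le> D + K \<and> -K \<le> a \<and> a \<le> D + K \<and> -K \<le> a - b \<and> a - b \<le> D + K}"

lemma hex_dist_VT_le_iff:
  assumes "0 \<le> K"
  shows "(\<exists>y\<in>VT D. hex_dist q y \<le> K) \<longleftrightarrow> q \<in> VT_nbhd (int D) K"
proof
  assume "\<exists>y\<in>VT D. hex_dist q y \<le> K"
  then show "q \<in> VT_nbhd (int D) K"
    unfolding VT_def VT_nbhd_def hex_dist_def hex_norm_le_iff by (cases q) (auto simp: abs_le_iff)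
next
  assume "q \<in> VT_nbhd (int D) K"
  then obtain a b where q: "q = (a, b)" and nbhd: "-K \<le> b" "b \<le> int D + K" "-K \<le> a"
    "a \<le> int D + K" "-K \<le> a - b" "a - b \<le> int D + K"
    unfolding VT_nbhd_def by (cases q) auto
  \<comment> \<open>a nearest point of \<open>T_D\<close>: clamp \<open>b\<close> into \<open>[0, D]\<close>, then \<open>a\<close> into \<open>[b', D]\<close>\<close>
  define b' where "b' = max 0 (min b (int D))"
  define a' where "a' = max b' (min a (int D))"
  have "(a', b') \<in> VT D" unfolding VT_def a'_def b'_def by auto
  moreover have "hex_dist q (a', b') \<le> K"
    using nbhd assms unfolding q hex_dist_def hex_norm_le_iff a'_def b'_def by (simp add: max_def min_def abs_le_iff)
  ultimately show "\<exists>y\<in>VT D. hex_dist q y \<le> K" by blast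
qed

lemma hex_dist_padd: "hex_dist p (padd c q) = hex_dist (psub p c) q"
  unfolding hex_dist_def padd_def psub_def by (simp add: algebra_simps)

lemma hex_dist_psub: "hex_dist p (psub c q) = hex_dist (psub c p) q"
proof -
  have "hex_dist (psub c p) q = hex_norm (- (fst c - fst q - fst p)) (- (snd c - snd q - snd p))"
    unfolding hex_dist_def psub_def by (simp add: algebra_simps)
  then show ?thesis unfolding hex_norm_uminus by (simp add: hex_dist_def psub_def)
qed

lemma tcopy_nonempty: "tcopy s c D \<noteq> {}"
proof -
  have "(0, 0) \<in> VT D" unfolding VT_def by simp
  then show ?thesis unfolding tcopy_def by auto
qed

lemma tsetdist_tcopy_le_iff:
  "tsetdist p (tcopy True c D) \<le> k \<longleftrightarrow> psub p c \<in> VT_nbhd (int D) (int k)"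
  "tsetdist p (tcopy False c D) \<le> k \<longleftrightarrow> psub c p \<in> VT_nbhd (int D) (int k)"
  unfolding tsetdist_le_iff[OF tcopy_nonempty]
  by (simp_all add: tcopy_def hex_dist_padd hex_dist_psub hex_dist_VT_le_iff)

lemma inj_emb: "inj emb"
proof (rule injI)
  fix p q assume "emb p = emb q"
  then have "snd p = snd q" "real_of_int (fst p) = real_of_int (fst q)"
    unfolding emb_def by auto
  then show "p = q" by (simp add: prod_eq_iff)
qed

lemma seg_pts_eq_iff: "seg_pts p q = seg_pts p' q' \<longleftrightarrow> {p, q} = {p', q'}"
proof
  assume eq: "seg_pts p q = seg_pts p' q'"
  have "emb ` {p, q} \<subseteq> closed_segment (emb p') (emb q')"
       "emb ` {p', q'} \<subseteq> closed_segment (emb p) (emb q)"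
    using eq[unfolded seg_pts_def] by blast+
  then have "closed_segment (emb p) (emb q) \<subseteq> closed_segment (emb p') (emb q')"
       "closed_segment (emb p') (emb q') \<subseteq> closed_segment (emb p) (emb q)"
    by (intro closed_segment_subset convex_closed_segment; simp)+
  then have "closed_segment (emb p) (emb q) = closed_segment (emb p') (emb q')" by blast
  then have "{emb p, emb q} = {emb p', emb q'}" by simp
  then have "emb ` {p, q} = emb ` {p', q'}" by simp
  then show "{p, q} = {p', q'}" using inj_emb by (simp only: inj_image_eq_iff)
next
  assume "{p, q} = {p', q'}"
  then show "seg_pts p q = seg_pts p' q'"
    unfolding seg_pts_def doubleton_eq_iff by (auto simp: closed_segment_commute)
qed

text \<open>The offsets \<open>v\<close> for which \<open>c + v - T_D\<close> is the reflection of \<open>c + T_D\<close> across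
  one of its sides.\<close>
definition adjacent_offsets :: "int \<Rightarrow> tpt set" where
  "adjacent_offsets D = {(D, 0), (D, D), (2 * D, D)}"

lemma tcorners_eq:
  "tcorners True c D = {c, (fst c + int D, snd c), (fst c + int D, snd c + int D)}"
  "tcorners False c D = {c, (fst c - int D, snd c), (fst c - int D, snd c - int D)}"
  unfolding tcorners_def padd_def psub_def by simp_all

lemma seg_pts_commute: "seg_pts p q = seg_pts q p"
  by (simp add: seg_pts_eq_iff insert_commute)

lemma card_tsides:
  assumes "0 < D"
  shows "card (tsides s c D) = 3"
proof -
  obtain A B C where corners: "tcorners s c D = {A, B, C}" and distinct: "distinct [A, B, C]"
    using assms by (cases s) (auto simp: tcorners_eq prod_eq_iff)
  have "tsides s c D = {seg_pts A B, seg_pts A C, seg_pts B C}"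
  proof
    show "tsides s c D \<subseteq> {seg_pts A B, seg_pts A C, seg_pts B C}"
      unfolding tsides_def corners by (auto simp: seg_pts_commute)
    have "seg_pts X Y \<in> tsides s c D" if "X \<in> {A, B, C}" "Y \<in> {A, B, C}" "X \<noteq> Y" for X Y
      using that unfolding tsides_def corners by blast
    then show "{seg_pts A B, seg_pts A C, seg_pts B C} \<subseteq> tsides s c D"
      using distinct by simp
  qed
  moreover have "seg_pts A B \<noteq> seg_pts A C" "seg_pts A B \<noteq> seg_pts B C" "seg_pts A C \<noteq> seg_pts B C"
    using distinct by (simp_all add: seg_pts_eq_iff doubleton_eq_iff)
  ultimately show ?thesis by simp
qed

lemma two_common_corners_cases:
  assumes "0 < D" "p \<noteq> q" "{p, q} \<subseteq> tcorners s1 c1 D" "{p, q} \<subseteq> tcorners s2 c2 D"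
  shows "s1 = s2 \<and> c1 = c2
    \<or> s1 \<and> \<not> s2 \<and> psub c2 c1 \<in> adjacent_offsets (int D)
    \<or> \<not> s1 \<and> s2 \<and> psub c1 c2 \<in> adjacent_offsets (int D)"
proof -
  obtain a1 b1 a2 b2 where c: "c1 = (a1, b1)" "c2 = (a2, b2)" by fastforce
  have "p \<in> tcorners s1 c1 D" "q \<in> tcorners s1 c1 D" "p \<in> tcorners s2 c2 D" "q \<in> tcorners s2 c2 D"
    using assms(3,4) by auto
  then show ?thesis
    using assms(1,2) unfolding c adjacent_offsets_def psub_def
    by (cases s1; cases s2; simp only: tcorners_eq fst_conv snd_conv; elim insertE emptyE; simp; linarith?)
qed

lemma shared_side_cases:
  assumes "0 < D" and "card (tsides s1 c1 D \<inter> tsides s2 c2 D) = 1"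
  shows "s1 \<and> \<not> s2 \<and> psub c2 c1 \<in> adjacent_offsets (int D)
    \<or> \<not> s1 \<and> s2 \<and> psub c1 c2 \<in> adjacent_offsets (int D)"
proof -
  obtain X where "X \<in> tsides s1 c1 D" "X \<in> tsides s2 c2 D"
    using assms(2) by (metis card_1_singletonE Int_iff insertI1)
  then obtain p q p' q' where pq: "p \<noteq> q" "{p, q} \<subseteq> tcorners s1 c1 D"
    and pq': "{p', q'} \<subseteq> tcorners s2 c2 D"
    and "seg_pts p q = seg_pts p' q'"
    unfolding tsides_def by blast
  then have "{p, q} \<subseteq> tcorners s2 c2 D" by (simp add: seg_pts_eq_iff)
  moreover have "\<not> (s1 = s2 \<and> c1 = c2)"
  proof
    assume "s1 = s2 \<and> c1 = c2"
    then have "card (tsides s1 c1 D) = 1" using assms(2) by simp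
    then show False using card_tsides[OF assms(1)] by simp
  qed
  ultimately show ?thesis using two_common_corners_cases[OF assms(1) pq] by blast
qed

lemma Dk_pos: "0 < Dk k"
  unfolding Dk_def by simp

lemma int_Dk: "int (Dk k) = 3 * int k * int k + 3 * int k + 1"
  unfolding Dk_def by (simp add: power2_eq_square)

lemma Pk_iff_dvd: "q \<in> Pk k \<longleftrightarrow> int (Dk k) dvd fst q + (3 * int k + 1) * snd q"
proof
  assume "q \<in> Pk k"
  then obtain x y where "q = (x * (2 * int k + 1) + y * (int k + 1), x * int k + y * (2 * int k + 1))"
    unfolding Pk_def by blast
  then have "fst q + (3 * int k + 1) * snd q = int (Dk k) * (x + 2 * y)"
    unfolding int_Dk by (simp add: algebra_simps)
  then show "int (Dk k) dvd fst q + (3 * int k + 1) * snd q" by simp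
next
  assume "int (Dk k) dvd fst q + (3 * int k + 1) * snd q"
  then obtain t where t: "fst q + (3 * int k + 1) * snd q = int (Dk k) * t" by blast
  define y where "y = snd q - int k * t"
  define x where "x = t - 2 * y"
  have "fst q = x * (2 * int k + 1) + y * (int k + 1)" "snd q = x * int k + y * (2 * int k + 1)"
    using t unfolding x_def y_def int_Dk by (simp_all add: algebra_simps)
  then show "q \<in> Pk k" unfolding Pk_def by (intro CollectI exI[of _ x] exI[of _ y]) (simp add: prod_eq_iff)
qed

lemma padd_mem_Pk_iff:
  assumes "c \<in> Pk k"
  shows "padd c q \<in> Pk k \<longleftrightarrow> q \<in> Pk k"
proof -
  have "fst (padd c q) + (3 * int k + 1) * snd (padd c q)
      = (fst c + (3 * int k + 1) * snd c) + (fst q + (3 * int k + 1) * snd q)"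
    unfolding padd_def by (simp add: algebra_simps)
  then show ?thesis using assms unfolding Pk_iff_dvd by (simp add: dvd_add_right_iff)
qed

text \<open>The rotation by 120 degrees about the centre of \<open>T_D\<close>.\<close>
definition rot120 :: "int \<Rightarrow> tpt \<Rightarrow> tpt" where
  "rot120 D q = (D - snd q, fst q - snd q)"

lemma rot120_rot120_rot120: "rot120 D (rot120 D (rot120 D q)) = q"
  unfolding rot120_def by simp

lemma bij_rot120: "bij (rot120 D)"
  by (rule o_bij[of "rot120 D \<circ> rot120 D"]) (simp_all add: fun_eq_iff rot120_rot120_rot120)

lemma rot120_mem_Pk_iff: "rot120 (int (Dk k)) q \<in> Pk k \<longleftrightarrow> q \<in> Pk k"
proof -
  have rot: "rot120 (int (Dk k)) q \<in> Pk k" if "q \<in> Pk k" for q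
  proof -
    have "fst (rot120 (int (Dk k)) q) + (3 * int k + 1) * snd (rot120 (int (Dk k)) q)
        = (3 * int k + 1) * (fst q + (3 * int k + 1) * snd q) + int (Dk k) * (1 - 3 * snd q)"
      unfolding rot120_def int_Dk by (simp add: algebra_simps)
    then show ?thesis using that unfolding Pk_iff_dvd by simp
  qed
  show ?thesis using rot rot[of "rot120 (int (Dk k)) q"] rot120_rot120_rot120 by metis
qed

lemma rot120_mem_VT_nbhd_iff: "rot120 D q \<in> VT_nbhd D K \<longleftrightarrow> q \<in> VT_nbhd D K"
  unfolding rot120_def VT_nbhd_def by (cases q) auto

lemma psub_rot120: "psub (padd (D, 0) (rot120 D v)) (rot120 D q) = rot120 D (psub v q)"
  unfolding psub_def padd_def rot120_def by simp

lemma card_eq_if_preimage_eq: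
  assumes "bij f" and "\<And>x. f x \<in> B \<longleftrightarrow> x \<in> A"
  shows "card A = card B"
proof -
  have "A = f -` B" using assms(2) by blast
  then show ?thesis using assms(1) by (simp add: card_vimage_inj bij_is_inj bij_is_surj)
qed

definition common_nbhd :: "nat \<Rightarrow> tpt \<Rightarrow> tpt set" where
  "common_nbhd k v = {q \<in> Pk k. q \<in> VT_nbhd (int (Dk k)) (int k) \<and> psub v q \<in> VT_nbhd (int (Dk k)) (int k)}"

lemma card_common_nbhd_rot120:
  "card (common_nbhd k (padd (int (Dk k), 0) (rot120 (int (Dk k)) v))) = card (common_nbhd k v)"
  by (rule card_eq_if_preimage_eq[OF bij_rot120[of "int (Dk k)"], symmetric])
    (simp add: common_nbhd_def rot120_mem_Pk_iff rot120_mem_VT_nbhd_iff psub_rot120)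

lemma common_nbhd_base:
  fixes k :: nat
  defines "K \<equiv> int k" and "D \<equiv> int (Dk k)"
  shows "common_nbhd k (D, 0)
    = (\<lambda>i. ((3 * K + 1) * i, - i)) ` {0..K} \<union> (\<lambda>i. (D - (3 * K + 1) * i, i)) ` {0..K}"
proof -
  have D: "D = 3 * K * K + 3 * K + 1" unfolding D_def K_def by (rule int_Dk)
  have K: "0 \<le> K" unfolding K_def by simp
  show ?thesis
  proof (intro equalityI subsetI)
    fix q assume "q \<in> common_nbhd k (D, 0)"
    then obtain a b t where q: "q = (a, b)" and t: "a + (3 * K + 1) * b = D * t"
      and b: "-K \<le> b" "b \<le> K" and a: "-K \<le> a" "a \<le> D + K"
      unfolding common_nbhd_def Pk_iff_dvd VT_nbhd_def psub_def K_def D_def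
      by (cases q) (auto simp: dvd_def)
    have "(3 * K + 1) * b \<le> (3 * K + 1) * K" "(3 * K + 1) * (- K) \<le> (3 * K + 1) * b"
      using b K mult_left_mono[of b K "3 * K + 1"] mult_left_mono[of "- K" b "3 * K + 1"] by simp_all
    then have "D * (-1) < D * t" "D * t < D * 2"
      using t a K unfolding D by (simp_all add: algebra_simps)
    moreover have "0 < D" unfolding D_def using Dk_pos by simp
    ultimately have "-1 < t" "t < 2" by (simp_all only: mult_less_cancel_left_pos)
    then have "t = 0 \<or> t = 1" by linarith
    then show "q \<in> (\<lambda>i. ((3 * K + 1) * i, - i)) ` {0..K} \<union> (\<lambda>i. (D - (3 * K + 1) * i, i)) ` {0..K}"
    proof
      assume "t = 0"
      then have a_eq: "a = - ((3 * K + 1) * b)" using t by simp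
      have "b \<le> 0"
      proof (rule ccontr)
        assume "\<not> b \<le> 0"
        then have "3 * K + 1 \<le> (3 * K + 1) * b" using K mult_left_mono[of 1 b "3 * K + 1"] by simp
        then show False using a_eq a K by linarith
      qed
      then show ?thesis using a_eq b unfolding q by (intro UnI1 image_eqI[of _ _ "- b"]) auto
    next
      assume "t = 1"
      then have a_eq: "a = D - (3 * K + 1) * b" using t by simp
      have "0 \<le> b"
      proof (rule ccontr)
        assume "\<not> 0 \<le> b"
        then have "(3 * K + 1) * b \<le> - (3 * K + 1)" using K mult_left_mono[of b "- 1" "3 * K + 1"] by simp
        then show False using a_eq a K by linarith
      qed
      then show ?thesis using a_eq b unfolding q by (intro UnI2 image_eqI[of _ _ b]) auto
    qed
  next
    fix q assume "q \<in> (\<lambda>i. ((3 * K + 1) * i, - i)) ` {0..K} \<union> (\<lambda>i. (D - (3 * K + 1) * i, i)) ` {0..K}"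
    then obtain i where i: "0 \<le> i" "i \<le> K"
      and q: "q = ((3 * K + 1) * i, - i) \<or> q = (D - (3 * K + 1) * i, i)" by auto
    define P where "P = (3 * K + 1) * i"
    have "P \<le> (3 * K + 1) * K" unfolding P_def using i K by (simp add: mult_left_mono)
    also have "\<dots> = D - 2 * K - 1" unfolding D by (simp add: algebra_simps)
    finally have "0 \<le> P" "P \<le> D - 2 * K - 1" unfolding P_def using i K by simp_all
    then have "q \<in> VT_nbhd D K" "psub (D, 0) q \<in> VT_nbhd D K"
      using q i K unfolding VT_nbhd_def psub_def P_def[symmetric] by auto
    moreover have "D dvd fst q + (3 * K + 1) * snd q"
      using q by (auto simp: algebra_simps)
    ultimately show "q \<in> common_nbhd k (D, 0)"
      unfolding common_nbhd_def Pk_iff_dvd K_def D_def by simp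
  qed
qed

lemma card_common_nbhd_base: "card (common_nbhd k (int (Dk k), 0)) = 2 * k + 2"
proof -
  define K where "K = int k"
  define D where "D = int (Dk k)"
  have "0 < D" unfolding D_def using Dk_pos by simp
  let ?A = "(\<lambda>i. ((3 * K + 1) * i, - i)) ` {0..K}"
  let ?B = "(\<lambda>i. (D - (3 * K + 1) * i, i)) ` {0..K}"
  have "?A \<inter> ?B = {}" using \<open>0 < D\<close> by auto
  moreover have "card ?A = k + 1" "card ?B = k + 1"
    by (simp_all add: card_image inj_on_def K_def)
  moreover have "common_nbhd k (D, 0) = ?A \<union> ?B"
    unfolding D_def K_def by (rule common_nbhd_base)
  ultimately show ?thesis unfolding D_def by (simp add: card_Un_disjoint)
qed

lemma card_common_nbhd:
  assumes "v \<in> adjacent_offsets (int (Dk k))"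
  shows "card (common_nbhd k v) = 2 * k + 2"
proof -
  define D where "D = int (Dk k)"
  have "card (common_nbhd k (D, D)) = card (common_nbhd k (D, 0))"
    "card (common_nbhd k (2 * D, D)) = card (common_nbhd k (D, D))"
    using card_common_nbhd_rot120[of k "(D, D)"] card_common_nbhd_rot120[of k "(2 * D, D)"]
    by (simp_all add: D_def rot120_def padd_def)
  then show ?thesis
    using assms card_common_nbhd_base[of k] unfolding adjacent_offsets_def D_def by auto
qed

lemma bij_padd: "bij (padd c)"
  by (rule o_bij[of "\<lambda>p. psub p c"]) (auto simp: fun_eq_iff padd_def psub_def)

lemma card_near_tcopy_pair:
  assumes "c \<in> Pk k" and "psub c' c \<in> adjacent_offsets (int (Dk k))"
  shows "card {p \<in> Pk k. tsetdist p (tcopy True c (Dk k)) \<le> k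
                       \<and> tsetdist p (tcopy False c' (Dk k)) \<le> k} = 2 * k + 2"
proof -
  have "psub (padd c q) c = q" "psub c' (padd c q) = psub (psub c' c) q" for q
    by (simp_all add: padd_def psub_def)
  then have "card (common_nbhd k (psub c' c)) = card {p \<in> Pk k. tsetdist p (tcopy True c (Dk k)) \<le> k
                       \<and> tsetdist p (tcopy False c' (Dk k)) \<le> k}"
    by (intro card_eq_if_preimage_eq[OF bij_padd[of c]])
      (simp add: common_nbhd_def tsetdist_tcopy_le_iff padd_mem_Pk_iff[OF assms(1)] conj_commute)
  then show ?thesis using card_common_nbhd[OF assms(2)] by simp
qed

theorem lemma2:
  fixes k :: nat and s1 s2 :: bool and c1 c2 :: tpt
  assumes "k \<ge> 1"
    and "c1 \<in> Pk k" and "c2 \<in> Pk k"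
    and "card (tsides s1 c1 (Dk k) \<inter> tsides s2 c2 (Dk k)) = 1"
    and "tinterior (tcopy s1 c1 (Dk k)) \<inter> tinterior (tcopy s2 c2 (Dk k)) = {}"
  shows "card {p \<in> Pk k. tsetdist p (tcopy s1 c1 (Dk k)) \<le> k
                       \<and> tsetdist p (tcopy s2 c2 (Dk k)) \<le> k} = 2 * k + 2"
proof -
  from shared_side_cases[OF Dk_pos assms(4)] show ?thesis
  proof (elim disjE conjE)
    assume "s1" "\<not> s2" "psub c2 c1 \<in> adjacent_offsets (int (Dk k))"
    then show ?thesis using card_near_tcopy_pair[OF assms(2)] by simp
  next
    assume "\<not> s1" "s2" "psub c1 c2 \<in> adjacent_offsets (int (Dk k))"
    then show ?thesis using card_near_tcopy_pair[OF assms(3)] by (simp add: conj_commute)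
  qed
qed

end
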